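(* For all $n\ge1$, $$a_{\{0101,0102,0120,0121\}}(n)=a_{\{0102,0112,0120,0121\}}(n)=2^{n-1}+\binom{n-1}{2}.$$
   Context: An ascent in an integer sequence $s_1\cdots s_m$ is an index $j$ with $s_j<s_{j+1}$; $\mathrm{asc}$ denotes the number of ascents. An ascent sequence is a sequence $x_1\cdots x_n$ of nonnegative integers with $x_1=0$ and $x_i\le 1+\mathrm{asc}(x_1\cdots x_{i-1})$ for all $i\ge2$. The reduction $\mathrm{red}(w)$ of an integer sequence $w$ replaces the $i$-th smallest distinct letter of $w$ by $i-1$; a pattern is a reduced sequence. A sequence $x$ contains a pattern $p=p_1\cdots p_k$ if there are indices $i_1<\cdots<i_k$ with $\mathrm{red}(x_{i_1}\cdots x_{i_k})=p$; otherwise $x$ avoids $p$. For a finite set $P$ of patterns, $a_P(n)$ denotes the number of ascent sequences of length $n$ avoiding every pattern in $P$. *)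

theory Defs
  imports Main
begin

definition asc :: "nat list \<Rightarrow> nat" where
  "asc s = card {j. Suc j < length s \<and> s ! j < s ! Suc j}"

definition ascent_seq :: "nat list \<Rightarrow> bool" where
  "ascent_seq x \<longleftrightarrow> x \<noteq> [] \<and> x ! 0 = 0 \<and>
     (\<forall>i. 1 \<le> i \<and> i < length x \<longrightarrow> x ! i \<le> 1 + asc (take i x))"

definition red :: "nat list \<Rightarrow> nat list" where
  "red w = map (\<lambda>a. card {b \<in> set w. b < a}) w"

definition contains :: "nat list \<Rightarrow> nat list \<Rightarrow> bool" where
  "contains x p \<longleftrightarrow> (\<exists>ind :: nat \<Rightarrow> nat.
      strict_mono_on {..<length p} ind \<and> (\<forall>k<length p. ind k < length x) \<and>
      red (map (\<lambda>k. x ! ind k) [0..<length p]) = p)"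

definition avoids :: "nat list \<Rightarrow> nat list \<Rightarrow> bool" where
  "avoids x p \<longleftrightarrow> \<not> contains x p"

definition a_count :: "nat list set \<Rightarrow> nat \<Rightarrow> nat" where
  "a_count P n = card {x. length x = n \<and> ascent_seq x \<and> (\<forall>p\<in>P. avoids x p)}"

end

theory Submission
  imports Defs
begin

(*
  Avoiding 0101, 0102, 0120, 0121: a weakly increasing ascent sequence can only rise by one at a
  time, so it is a staircase determined by its set of rise positions in {1..n-1}. Otherwise look
  at the first descent. The increasing prefix attains every value below its maximum, so a descent
  to a nonzero value creates 0121 and a descent from a value >= 2 creates 0120; hence the sequence
  drops from 1 to 0 and afterwards stays 0 (a later 1 gives 0101, a later value >= 2 gives 0102).
  These are the plateaus 0^i 1^(j-i) 0^(n-j) with 0 < i < j < n.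

  Avoiding 0102, 0112, 0120, 0121: either all entries are 0 or 1, or the first entry >= 2 is a 2
  directly after the first 1 (by 0102, 0112 and the ascent condition), everything after it is
  >= 2 (by 0120, 0121), and from there the sequence climbs by one and then stays constant (by
  0121, 0112). These are the ramps 0^i 1 2 ... (j-i) (j-i+1)^(n-j) with 0 < i < j < n.

  In both cases the pairs 0 < i < j < n are counted as the 2-subsets of {1..n-1}.
*)

section \<open>Reduction and patterns of length four\<close>

lemma red_nth: "i < length w \<Longrightarrow> red w ! i = card {b \<in> set w. b < w ! i}"
  by (simp add: red_def)

lemma card_less_elems_strict_mono:
  assumes "a \<in> A" "a < c" "finite A"
  shows "card {b \<in> A. b < a} < card {b \<in> A. b < (c::nat)}"
  using assms by (intro psubset_card_mono) auto

lemma red_less_iff: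
  assumes "i < length w" "j < length w"
  shows "red w ! i < red w ! j \<longleftrightarrow> w ! i < w ! j"
proof
  assume "w ! i < w ! j"
  then show "red w ! i < red w ! j"
    using assms by (simp add: red_nth card_less_elems_strict_mono)
next
  assume "red w ! i < red w ! j"
  moreover have "card {b \<in> set w. b < w ! j} \<le> card {b \<in> set w. b < w ! i}" if "w ! j \<le> w ! i"
    using that by (intro card_mono) auto
  ultimately show "w ! i < w ! j"
    using assms by (force simp: red_nth)
qed

lemma card_image_eq_if_same_kernel:
  assumes "\<And>k k'. k \<in> K \<Longrightarrow> k' \<in> K \<Longrightarrow> f k = f k' \<longleftrightarrow> g k = g k'"
  shows "card (f ` K) = card (g ` K)"
proof -
  define h where "h e = g (inv_into K f e)" for e
  have h_f: "h (f k) = g k" if "k \<in> K" for k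
  proof -
    have "inv_into K f (f k) \<in> K" "f (inv_into K f (f k)) = f k"
      using that by (auto simp: inv_into_into f_inv_into_f)
    then show ?thesis
      using assms that by (simp add: h_def)
  qed
  have "g ` K = h ` f ` K"
    by (force simp: h_f image_image)
  moreover have "inj_on h (f ` K)"
    using assms by (auto intro!: inj_onI simp: h_f)
  ultimately show ?thesis
    by (simp add: card_image)
qed

lemma red_eq_red_iff:
  assumes "length u = length v"
  shows "red u = red v \<longleftrightarrow>
    (\<forall>i < length u. \<forall>j < length u. u ! i < u ! j \<longleftrightarrow> v ! i < v ! j)"
proof
  assume "red u = red v"
  then show "\<forall>i < length u. \<forall>j < length u. u ! i < u ! j \<longleftrightarrow> v ! i < v ! j"
    using assms red_less_iff by metis
next
  assume iso: "\<forall>i < length u. \<forall>j < length u. u ! i < u ! j \<longleftrightarrow> v ! i < v ! j"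
  have "card {b \<in> set u. b < u ! i} = card {b \<in> set v. b < v ! i}" if "i < length u" for i
  proof -
    let ?K = "{k. k < length u \<and> u ! k < u ! i}"
    have "{b \<in> set u. b < u ! i} = (!) u ` ?K" "{b \<in> set v. b < v ! i} = (!) v ` ?K"
      using iso that assms by (auto simp: in_set_conv_nth)
    moreover have "card ((!) u ` ?K) = card ((!) v ` ?K)"
    proof (rule card_image_eq_if_same_kernel)
      fix k k' assume "k \<in> ?K" "k' \<in> ?K"
      then show "u ! k = u ! k' \<longleftrightarrow> v ! k = v ! k'"
        using iso by (metis (no_types, lifting) mem_Collect_eq nat_neq_iff)
    qed
    ultimately show ?thesis by simp
  qed
  then show "red u = red v"
    using assms by (intro nth_equalityI) (simp_all add: red_def)
qed

lemma red_pattern: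
  assumes "set p = {..<m}"
  shows "red p = p"
proof (rule nth_equalityI)
  fix i assume i: "i < length (red p)"
  then have "p ! i < m"
    using assms nth_mem by (fastforce simp: red_def)
  then have "{b \<in> set p. b < p ! i} = {..<p ! i}"
    unfolding assms by auto
  then show "red p ! i = p ! i"
    using i by (simp add: red_def)
qed (simp add: red_def)

lemma red_eq_pattern_iff:
  assumes "red p = p" "length w = length p"
  shows "red w = p \<longleftrightarrow> (\<forall>i < length p. \<forall>j < length p. w ! i < w ! j \<longleftrightarrow> p ! i < p ! j)"
  using red_eq_red_iff[OF assms(2)] assms by simp

lemma reduced_patterns:
  "red [0,1,0,1] = [0,1,0,1]" "red [0,1,0,2] = [0,1,0,2]" "red [0,1,1,2] = [0,1,1,2]"
  "red [0,1,2,0] = [0,1,2,0]" "red [0,1,2,1] = [0,1,2,1]"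
  by (rule red_pattern[of _ 2], auto) (rule red_pattern[of _ 3], auto)+

lemma contains_length4:
  fixes p0 p1 p2 p3 :: nat
  defines "p \<equiv> [p0, p1, p2, p3]"
  shows "contains x p \<longleftrightarrow>
    (\<exists>i j k l. i < j \<and> j < k \<and> k < l \<and> l < length x \<and> red [x!i, x!j, x!k, x!l] = p)"
proof -
  have len: "length p = 4"
    by (simp add: p_def)
  have upt4: "[0..<4] = [0, 1, 2, 3::nat]"
    by (simp add: upt_rec)
  show ?thesis
  proof
    assume "contains x p"
    then obtain ind where ind: "strict_mono_on {..<4} ind" "\<forall>k<4. ind k < length x"
      and "red (map (\<lambda>k. x ! ind k) [0..<4]) = p"
      unfolding contains_def len by blast
    then have "red [x ! ind 0, x ! ind 1, x ! ind 2, x ! ind 3] = p"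
      by (simp add: upt4)
    moreover have "ind 0 < ind 1" "ind 1 < ind 2" "ind 2 < ind 3" "ind 3 < length x"
      using ind by (simp_all add: strict_mono_on_def)
    ultimately show "\<exists>i j k l. i < j \<and> j < k \<and> k < l \<and> l < length x \<and> red [x!i, x!j, x!k, x!l] = p"
      by blast
  next
    assume "\<exists>i j k l. i < j \<and> j < k \<and> k < l \<and> l < length x \<and> red [x!i, x!j, x!k, x!l] = p"
    then obtain i j k l where ijkl: "i < j" "j < k" "k < l" "l < length x"
      and red: "red [x!i, x!j, x!k, x!l] = p"
      by blast
    define ind where "ind t = [i, j, k, l] ! t" for t
    have "strict_mono_on {..<4} ind"
      using ijkl by (auto simp: strict_mono_on_def ind_def less_Suc_eq numeral_eq_Suc)
    moreover have "\<forall>t<4. ind t < length x"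
      using ijkl by (auto simp: ind_def less_Suc_eq numeral_eq_Suc)
    moreover have "red (map (\<lambda>t. x ! ind t) [0..<4]) = p"
      using red by (simp add: upt4 ind_def)
    ultimately show "contains x p"
      unfolding contains_def len by blast
  qed
qed

lemma red_0101_iff: "red [a,b,c,d] = [0,1,0,1] \<longleftrightarrow> a = c \<and> b = d \<and> a < b"
  by (subst red_eq_pattern_iff[OF reduced_patterns(1)]) (auto simp: All_less_Suc)

lemma red_0102_iff: "red [a,b,c,d] = [0,1,0,2] \<longleftrightarrow> a = c \<and> a < b \<and> b < d"
  by (subst red_eq_pattern_iff[OF reduced_patterns(2)]) (auto simp: All_less_Suc)

lemma red_0112_iff: "red [a,b,c,d] = [0,1,1,2] \<longleftrightarrow> b = c \<and> a < b \<and> b < d"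
  by (subst red_eq_pattern_iff[OF reduced_patterns(3)]) (auto simp: All_less_Suc)

lemma red_0120_iff: "red [a,b,c,d] = [0,1,2,0] \<longleftrightarrow> a = d \<and> a < b \<and> b < c"
  by (subst red_eq_pattern_iff[OF reduced_patterns(4)]) (auto simp: All_less_Suc)

lemma red_0121_iff: "red [a,b,c,d] = [0,1,2,1] \<longleftrightarrow> b = d \<and> a < b \<and> b < c"
  by (subst red_eq_pattern_iff[OF reduced_patterns(5)]) (auto simp: All_less_Suc)

lemma contains_0101_iff:
  "contains x [0,1,0,1] \<longleftrightarrow> (\<exists>i j k l. i < j \<and> j < k \<and> k < l \<and> l < length x \<and>
     x!i = x!k \<and> x!j = x!l \<and> x!i < x!j)"
  unfolding contains_length4 red_0101_iff ..

lemma contains_0102_iff: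
  "contains x [0,1,0,2] \<longleftrightarrow> (\<exists>i j k l. i < j \<and> j < k \<and> k < l \<and> l < length x \<and>
     x!i = x!k \<and> x!i < x!j \<and> x!j < x!l)"
  unfolding contains_length4 red_0102_iff ..

lemma contains_0112_iff:
  "contains x [0,1,1,2] \<longleftrightarrow> (\<exists>i j k l. i < j \<and> j < k \<and> k < l \<and> l < length x \<and>
     x!j = x!k \<and> x!i < x!j \<and> x!j < x!l)"
  unfolding contains_length4 red_0112_iff ..

lemma contains_0120_iff:
  "contains x [0,1,2,0] \<longleftrightarrow> (\<exists>i j k l. i < j \<and> j < k \<and> k < l \<and> l < length x \<and>
     x!i = x!l \<and> x!i < x!j \<and> x!j < x!k)"
  unfolding contains_length4 red_0120_iff ..

lemma contains_0121_iff:
  "contains x [0,1,2,1] \<longleftrightarrow> (\<exists>i j k l. i < j \<and> j < k \<and> k < l \<and> l < length x \<and>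
     x!j = x!l \<and> x!i < x!j \<and> x!j < x!k)"
  unfolding contains_length4 red_0121_iff ..

lemma sorted_red:
  assumes "sorted w"
  shows "sorted (red w)"
  unfolding sorted_iff_nth_mono
proof (intro allI impI)
  fix i j assume "i \<le> j" "j < length (red w)"
  moreover from this have "w ! i \<le> w ! j"
    using sorted_nth_mono[OF assms] by (simp add: red_def)
  ultimately show "red w ! i \<le> red w ! j"
    by (auto simp: red_def intro!: card_mono)
qed

lemma contains_sorted_imp_sorted:
  assumes "sorted x" "contains x p"
  shows "sorted p"
proof -
  obtain ind where ind: "strict_mono_on {..<length p} ind" "\<forall>k<length p. ind k < length x"
    and p: "red (map (\<lambda>k. x ! ind k) [0..<length p]) = p" (is "red ?w = p")
    using assms(2) unfolding contains_def by metis
  have "sorted ?w"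
    unfolding sorted_iff_nth_mono
  proof (intro allI impI)
    fix a b assume "a \<le> b" "b < length ?w"
    then show "?w ! a \<le> ?w ! b"
      using ind assms(1) strict_mono_on_leD[OF ind(1), of a b] by (simp add: sorted_nth_mono)
  qed
  from sorted_red[OF this] show ?thesis
    unfolding p .
qed

lemma contains_imp_card_set_le:
  assumes "contains x p"
  shows "card (set p) \<le> card (set x)"
proof -
  obtain ind where "\<forall>k<length p. ind k < length x"
    and p: "red (map (\<lambda>k. x ! ind k) [0..<length p]) = p" (is "red ?w = p")
    using assms unfolding contains_def by blast
  then have w: "set ?w \<subseteq> set x"
    by auto
  have "card (set (red ?w)) \<le> card (set ?w)"
    unfolding red_def set_map by (rule card_image_le) simp
  also have "\<dots> \<le> card (set x)"
    using w by (simp add: card_mono)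
  finally show ?thesis
    using p by simp
qed

lemma sorted_avoids: "sorted x \<Longrightarrow> \<not> sorted p \<Longrightarrow> avoids x p"
  using contains_sorted_imp_sorted avoids_def by blast

lemma binary_avoids:
  assumes "set x \<subseteq> {0, 1}" "{0, 1, 2} \<subseteq> set p"
  shows "avoids x p"
proof -
  have "card (set x) < card (set p)"
    using card_mono[OF _ assms(1)] card_mono[OF _ assms(2)] by simp
  then show ?thesis
    using contains_imp_card_set_le avoids_def by (meson leD)
qed

section \<open>Ascents\<close>

lemma asc_single: "asc [a] = 0"
  by (simp add: asc_def)

lemma asc_snoc:
  assumes "s \<noteq> []"
  shows "asc (s @ [v]) = asc s + (if last s < v then 1 else 0)"
proof -
  let ?A = "{j. Suc j < length s \<and> s ! j < s ! Suc j}"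
  let ?B = "{j. Suc j = length s \<and> last s < v}"
  have "Suc j < length (s @ [v]) \<and> (s @ [v]) ! j < (s @ [v]) ! Suc j \<longleftrightarrow> j \<in> ?A \<union> ?B" for j
  proof (cases "Suc j = length s")
    case True
    then have "(s @ [v]) ! j = last s" "(s @ [v]) ! Suc j = v"
      using assms by (simp_all add: nth_append last_conv_nth flip: True)
    then show ?thesis
      using True by auto
  qed (auto simp: nth_append)
  then have "{j. Suc j < length (s @ [v]) \<and> (s @ [v]) ! j < (s @ [v]) ! Suc j} = ?A \<union> ?B"
    by blast
  moreover have "finite ?A" "finite ?B" "?A \<inter> ?B = {}"
    by (auto intro: finite_subset[of _ "{..<length s}"])
  moreover have "?B = (if last s < v then {length s - 1} else {})"
    using assms by auto
  ultimately show ?thesis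
    unfolding asc_def by (simp add: card_Un_disjoint)
qed

definition small_steps :: "nat list \<Rightarrow> bool" where
  "small_steps s \<longleftrightarrow> (\<forall>i. Suc i < length s \<longrightarrow> s ! Suc i \<le> Suc (s ! i))"

lemma small_steps_take: "small_steps s \<Longrightarrow> small_steps (take k s)"
  by (simp add: small_steps_def)

lemma small_steps_snocD: "small_steps (s @ [v]) \<Longrightarrow> small_steps s"
  using small_steps_take[of "s @ [v]" "length s"] by simp

lemma sorted_asc_le: "sorted s \<Longrightarrow> s \<noteq> [] \<Longrightarrow> hd s + asc s \<le> last s"
proof (induction s rule: rev_induct)
  case (snoc v s)
  show ?case
  proof (cases "s = []")
    case False
    have "hd s + asc s \<le> last s" "last s \<le> v"
      using snoc False by (auto simp: sorted_append)
    then show ?thesis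
      using False by (simp add: asc_snoc)
  qed (simp add: asc_single)
qed simp

lemma small_steps_last_le: "small_steps s \<Longrightarrow> s \<noteq> [] \<Longrightarrow> last s \<le> hd s + asc s"
proof (induction s rule: rev_induct)
  case (snoc v s)
  show ?case
  proof (cases "s = []")
    case False
    have "last s \<le> hd s + asc s"
      using snoc False small_steps_snocD by blast
    moreover have "v \<le> Suc (last s)"
      using snoc.prems(1) False
      by (auto simp: small_steps_def nth_append last_conv_nth
          dest!: spec[of _ "length s - 1"])
    ultimately show ?thesis
      using False by (simp add: asc_snoc)
  qed (simp add: asc_single)
qed simp

lemma last_take_Suc: "t < length x \<Longrightarrow> last (take (Suc t) x) = x ! t"
  by (simp add: take_Suc_conv_app_nth)

lemma ascent_seq_if_small_steps:
  assumes "x \<noteq> []" "x ! 0 = 0" "small_steps x"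
  shows "ascent_seq x"
  unfolding ascent_seq_def
proof (intro conjI allI impI assms(1,2))
  fix i assume "1 \<le> i \<and> i < length x"
  then obtain t where t: "i = Suc t" "Suc t < length x"
    by (cases i) auto
  have "last (take (Suc t) x) \<le> hd (take (Suc t) x) + asc (take (Suc t) x)"
    using assms(3) t(2) by (intro small_steps_last_le small_steps_take) auto
  then have "x ! t \<le> asc (take i x)"
    using t assms(1,2) by (simp add: last_take_Suc hd_conv_nth)
  moreover have "x ! i \<le> Suc (x ! t)"
    using t assms(3) by (simp add: small_steps_def)
  ultimately show "x ! i \<le> 1 + asc (take i x)"
    by simp
qed

lemma ascent_seq_nth_Suc_le:
  assumes "ascent_seq x" "Suc t < length x" "sorted (take (Suc t) x)"
  shows "x ! Suc t \<le> Suc (x ! t)"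
proof -
  have "hd (take (Suc t) x) + asc (take (Suc t) x) \<le> last (take (Suc t) x)"
    using assms(2,3) by (intro sorted_asc_le) auto
  then have "asc (take (Suc t) x) \<le> x ! t"
    using assms(1,2) by (simp add: last_take_Suc hd_conv_nth ascent_seq_def)
  moreover have "x ! Suc t \<le> 1 + asc (take (Suc t) x)"
    using assms(1,2) unfolding ascent_seq_def by simp
  ultimately show ?thesis
    by simp
qed

lemma ascent_seq_sorted_prefix_small_steps:
  assumes "ascent_seq x" "sorted (take k x)"
  shows "small_steps (take k x)"
  unfolding small_steps_def
proof (intro allI impI)
  fix i assume "Suc i < length (take k x)"
  moreover have "sorted (take (Suc i) x)"
    using sorted_wrt_take[OF assms(2), of "Suc i"] calculation by (simp add: min_absorb1)
  ultimately show "take k x ! Suc i \<le> Suc (take k x ! i)"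
    using ascent_seq_nth_Suc_le[OF assms(1)] by simp
qed

lemma small_steps_intermediate_value:
  assumes "small_steps x" "x ! 0 = 0" "q < length x" "v \<le> x ! q"
  shows "\<exists>t \<le> q. x ! t = v"
  using assms(3,4)
proof (induction q)
  case (Suc q)
  show ?case
  proof (cases "v \<le> x ! q")
    case True
    then show ?thesis
      using Suc by (meson Suc_lessD le_SucI)
  next
    case False
    then have "v = x ! Suc q"
      using Suc.prems assms(1) unfolding small_steps_def by fastforce
    then show ?thesis
      by blast
  qed
qed (use assms(2) in simp)

lemma small_steps_if_binary:
  assumes "set x \<subseteq> {0, 1}"
  shows "small_steps x"
  unfolding small_steps_def
proof (intro allI impI)
  fix i assume "Suc i < length x"
  then have "x ! Suc i \<in> {0, 1}"
    using assms nth_mem by blast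
  then show "x ! Suc i \<le> Suc (x ! i)"
    by auto
qed

section \<open>The four families\<close>

definition avoiders :: "nat list set \<Rightarrow> nat \<Rightarrow> nat list set" where
  "avoiders P n = {x. length x = n \<and> ascent_seq x \<and> (\<forall>p\<in>P. avoids x p)}"

definition stair :: "nat \<Rightarrow> nat set \<Rightarrow> nat list" where
  "stair n S = map (\<lambda>t. card (S \<inter> {1..t})) [0..<n]"

definition plateau :: "nat \<Rightarrow> nat \<Rightarrow> nat \<Rightarrow> nat list" where
  "plateau n i j = map (\<lambda>t. if i \<le> t \<and> t < j then 1 else 0) [0..<n]"

definition binary_word :: "nat \<Rightarrow> nat set \<Rightarrow> nat list" where
  "binary_word n S = map (\<lambda>t. if t \<in> S then 1 else 0) [0..<n]"

definition ramp :: "nat \<Rightarrow> nat \<Rightarrow> nat \<Rightarrow> nat list" where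
  "ramp n i j = map (\<lambda>t. if t < i then 0 else Suc (min t j - i)) [0..<n]"

definition inner_pairs :: "nat \<Rightarrow> (nat \<times> nat) set" where
  "inner_pairs n = {(i, j). 0 < i \<and> i < j \<and> j < n}"

lemma length_stair [simp]: "length (stair n S) = n"
  by (simp add: stair_def)

lemma stair_nth_0: "0 < n \<Longrightarrow> stair n S ! 0 = 0"
  by (simp add: stair_def)

lemma stair_nth_Suc:
  assumes "Suc t < n"
  shows "stair n S ! Suc t = stair n S ! t + (if Suc t \<in> S then 1 else 0)"
proof -
  have "S \<inter> {1..Suc t} = (if Suc t \<in> S then insert (Suc t) (S \<inter> {1..t}) else S \<inter> {1..t})"
    by (auto simp: le_Suc_eq)
  then show ?thesis
    using assms by (simp add: stair_def)
qed

lemma sorted_stair: "sorted (stair n S)"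
  unfolding sorted_iff_nth_Suc by (simp add: stair_nth_Suc)

lemma small_steps_stair: "small_steps (stair n S)"
  unfolding small_steps_def by (simp add: stair_nth_Suc)

lemma stair_in_avoiders:
  assumes "0 < n"
  shows "stair n S \<in> avoiders {[0,1,0,1], [0,1,0,2], [0,1,2,0], [0,1,2,1]} n"
proof -
  have "ascent_seq (stair n S)"
    using assms length_greater_0_conv[of "stair n S"]
    by (intro ascent_seq_if_small_steps small_steps_stair) (auto simp: stair_nth_0)
  then show ?thesis
    unfolding avoiders_def using sorted_stair by (auto intro!: sorted_avoids)
qed

lemma plateau_in_avoiders:
  assumes "0 < i" "0 < n"
  shows "plateau n i j \<in> avoiders {[0,1,0,1], [0,1,0,2], [0,1,2,0], [0,1,2,1]} n"
proof -
  have binary: "set (plateau n i j) \<subseteq> {0, 1}"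
    by (auto simp: plateau_def)
  then have "ascent_seq (plateau n i j)"
    using assms by (intro ascent_seq_if_small_steps small_steps_if_binary) (auto simp: plateau_def)
  moreover have "avoids (plateau n i j) [0,1,0,1]"
    unfolding avoids_def contains_0101_iff by (auto simp: plateau_def)
  ultimately show ?thesis
    unfolding avoiders_def using binary by (auto intro!: binary_avoids simp: plateau_def)
qed

lemma binary_word_in_avoiders:
  assumes "0 \<notin> S" "0 < n"
  shows "binary_word n S \<in> avoiders {[0,1,0,2], [0,1,1,2], [0,1,2,0], [0,1,2,1]} n"
proof -
  have binary: "set (binary_word n S) \<subseteq> {0, 1}"
    by (auto simp: binary_word_def)
  then have "ascent_seq (binary_word n S)"
    using assms by (intro ascent_seq_if_small_steps small_steps_if_binary) (auto simp: binary_word_def)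
  then show ?thesis
    unfolding avoiders_def using binary by (auto intro!: binary_avoids simp: binary_word_def)
qed

lemma ramp_nth: "t < n \<Longrightarrow> ramp n i j ! t = (if t < i then 0 else Suc (min t j - i))"
  by (simp add: ramp_def)

lemma sorted_ramp: "sorted (ramp n i j)"
  unfolding sorted_iff_nth_Suc by (auto simp: ramp_def)

lemma small_steps_ramp: "small_steps (ramp n i j)"
  unfolding small_steps_def by (auto simp: ramp_def)

lemma ramp_in_avoiders:
  assumes "0 < i" "0 < n"
  shows "ramp n i j \<in> avoiders {[0,1,0,2], [0,1,1,2], [0,1,2,0], [0,1,2,1]} n"
proof -
  have "ascent_seq (ramp n i j)"
    using assms by (intro ascent_seq_if_small_steps small_steps_ramp) (auto simp: ramp_def)
  moreover have "avoids (ramp n i j) [0,1,1,2]"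
    unfolding avoids_def contains_0112_iff by (auto simp: ramp_def min_def split: if_splits)
  ultimately show ?thesis
    unfolding avoiders_def using sorted_ramp by (auto intro!: sorted_avoids simp: ramp_def)
qed

section \<open>Avoiders of 0101, 0102, 0120, 0121\<close>

lemma first_descent:
  assumes "\<not> sorted x"
  obtains q where "Suc q < length x" "x ! Suc q < x ! q" "sorted (take (Suc q) x)"
proof -
  have "\<exists>q. Suc q < length x \<and> x ! Suc q < x ! q"
    using assms by (auto simp: sorted_iff_nth_Suc not_le)
  then obtain q where q: "Suc q < length x" "x ! Suc q < x ! q"
    and before: "\<forall>m<q. \<not> (Suc m < length x \<and> x ! Suc m < x ! m)"
    using exists_least_iff[of "\<lambda>q. Suc q < length x \<and> x ! Suc q < x ! q"] by blast
  have "sorted (take (Suc q) x)"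
    unfolding sorted_iff_nth_Suc using before q(1) by (auto simp: not_less)
  with q that show ?thesis
    by blast
qed

definition rises :: "nat list \<Rightarrow> nat set" where
  "rises x = {t \<in> {1..<length x}. x ! t \<noteq> x ! (t - 1)}"

lemma stair_rises:
  assumes "sorted x" "small_steps x" "x ! 0 = 0"
  shows "x = stair (length x) (rises x)"
proof (rule nth_equalityI)
  fix t assume "t < length x"
  then show "x ! t = stair (length x) (rises x) ! t"
  proof (induction t)
    case (Suc t)
    have "x ! t \<le> x ! Suc t" "x ! Suc t \<le> Suc (x ! t)"
      using assms(1,2) Suc.prems by (auto simp: sorted_iff_nth_Suc small_steps_def)
    then show ?case
      using Suc by (auto simp: stair_nth_Suc rises_def)
  qed (use assms(3) in \<open>simp add: stair_nth_0\<close>)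
qed simp

lemma rises_stair:
  assumes "S \<subseteq> {1..<n}"
  shows "rises (stair n S) = S"
proof -
  have "stair n S ! t \<noteq> stair n S ! (t - 1) \<longleftrightarrow> t \<in> S" if "t \<in> {1..<n}" for t
    using that stair_nth_Suc[of "t - 1" n S] by simp
  then show ?thesis
    using assms unfolding rises_def length_stair by blast
qed

lemma first_descent_to_zero:
  assumes x: "ascent_seq x" "avoids x [0,1,2,0]" "avoids x [0,1,2,1]"
    and q: "Suc q < length x" "x ! Suc q < x ! q" "sorted (take (Suc q) x)"
  shows "x ! q = 1" "x ! Suc q = 0"
proof -
  have x0: "x ! 0 = 0"
    using x(1) by (simp add: ascent_seq_def)
  have "small_steps (take (Suc q) x)"
    using x(1) q(3) by (rule ascent_seq_sorted_prefix_small_steps)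
  then have attained: "\<exists>t \<le> q. x ! t = v" if v: "v \<le> x ! q" for v
  proof -
    obtain t where "t \<le> q" "take (Suc q) x ! t = v"
      using small_steps_intermediate_value[OF \<open>small_steps (take (Suc q) x)\<close>, of q v]
        v q(1) x0 by auto
    then show ?thesis
      by auto
  qed
  have "x ! Suc q = 0"
  proof (rule ccontr)
    assume "x ! Suc q \<noteq> 0"
    moreover obtain t where "t \<le> q" "x ! t = x ! Suc q"
      using attained[of "x ! Suc q"] q(2) by auto
    ultimately have "0 < t" "t < q"
      using x0 q(2) by (auto intro!: Nat.gr0I simp: le_less)
    then have "contains x [0,1,2,1]"
      unfolding contains_0121_iff using q(1,2) x0 \<open>x ! t = x ! Suc q\<close> \<open>x ! Suc q \<noteq> 0\<close>
      by (intro exI[of _ 0] exI[of _ t] exI[of _ q] exI[of _ "Suc q"]) auto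
    then show False
      using x(3) by (simp add: avoids_def)
  qed
  moreover have "x ! q \<le> 1"
  proof (rule ccontr)
    assume "\<not> x ! q \<le> 1"
    moreover obtain t where "t \<le> q" "x ! t = 1"
      using attained[of 1] \<open>\<not> x ! q \<le> 1\<close> by auto
    ultimately have "0 < t" "t < q"
      using x0 by (auto intro!: Nat.gr0I simp: le_less)
    then have "contains x [0,1,2,0]"
      unfolding contains_0120_iff using q(1) x0 \<open>x ! t = 1\<close> \<open>\<not> x ! q \<le> 1\<close> \<open>x ! Suc q = 0\<close>
      by (intro exI[of _ 0] exI[of _ t] exI[of _ q] exI[of _ "Suc q"]) auto
    then show False
      using x(2) by (simp add: avoids_def)
  qed
  ultimately show "x ! q = 1" "x ! Suc q = 0"
    using q(2) by simp_all
qed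

lemma zeros_after_return_to_zero:
  assumes x: "avoids x [0,1,0,1]" "avoids x [0,1,0,2]"
    and "x ! 0 = 0" "0 < i" "x ! i = 1" "i < k" "x ! k = 0" "k < t" "t < length x"
  shows "x ! t = 0"
proof (rule ccontr)
  assume "x ! t \<noteq> 0"
  then consider "x ! t = 1" | "1 < x ! t"
    by linarith
  then show False
  proof cases
    case 1
    then have "contains x [0,1,0,1]"
      unfolding contains_0101_iff using assms(3-)
      by (intro exI[of _ 0] exI[of _ i] exI[of _ k] exI[of _ t]) auto
    then show False
      using x(1) by (simp add: avoids_def)
  next
    case 2
    then have "contains x [0,1,0,2]"
      unfolding contains_0102_iff using assms(3-)
      by (intro exI[of _ 0] exI[of _ i] exI[of _ k] exI[of _ t]) auto
    then show False
      using x(2) by (simp add: avoids_def)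
  qed
qed

lemma plateau_after_first_descent:
  assumes x: "length x = n" "ascent_seq x" "avoids x [0,1,0,1]" "avoids x [0,1,0,2]"
    and q: "Suc q < n" "x ! q = 1" "x ! Suc q = 0" "sorted (take (Suc q) x)"
  obtains i where "0 < i" "i \<le> q" "x = plateau n i (Suc q)"
proof -
  have x0: "x ! 0 = 0"
    using x(2) by (simp add: ascent_seq_def)
  obtain i where i: "i \<le> q" "x ! i = 1" and before: "\<forall>t<i. \<not> (t \<le> q \<and> x ! t = 1)"
    using exists_least_iff[of "\<lambda>t. t \<le> q \<and> x ! t = 1"] q(2) by blast
  have "0 < i"
    using i x0 by (cases i) auto
  have prefix_mono: "x ! a \<le> x ! b" if "a \<le> b" "b \<le> q" for a b
    using sorted_nth_mono[OF q(4), of a b] that q(1) x(1) by simp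
  have "x ! t = plateau n i (Suc q) ! t" if "t < n" for t
  proof -
    consider "t < i" | "i \<le> t" "t \<le> q" | "t = Suc q" | "Suc q < t"
      by linarith
    then show ?thesis
    proof cases
      case 1
      then show ?thesis
        using prefix_mono[of t q] before i q(2) that by (force simp: plateau_def)
    next
      case 2
      then show ?thesis
        using prefix_mono[of i t] prefix_mono[of t q] i q(2) that by (simp add: plateau_def)
    next
      case 3
      then show ?thesis
        using q(3) that by (simp add: plateau_def)
    next
      case 4
      then show ?thesis
        using zeros_after_return_to_zero[OF x(3,4) x0 \<open>0 < i\<close> i(2) _ q(3)] i(1) x(1) that
        by (simp add: plateau_def)
    qed
  qed
  then have "x = plateau n i (Suc q)"
    using x(1) by (intro nth_equalityI) (simp_all add: plateau_def)
  with i \<open>0 < i\<close> that show ?thesis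
    by blast
qed

lemma avoider_is_stair_or_plateau:
  assumes "x \<in> avoiders {[0,1,0,1], [0,1,0,2], [0,1,2,0], [0,1,2,1]} n"
  shows "x \<in> stair n ` Pow {1..<n} \<union> (\<lambda>(i, j). plateau n i j) ` inner_pairs n"
proof -
  have x: "length x = n" "ascent_seq x" "avoids x [0,1,0,1]" "avoids x [0,1,0,2]"
    "avoids x [0,1,2,0]" "avoids x [0,1,2,1]"
    using assms by (simp_all add: avoiders_def)
  show ?thesis
  proof (cases "sorted x")
    case True
    then have "small_steps x"
      using ascent_seq_sorted_prefix_small_steps[OF x(2), of "length x"] by simp
    moreover have "x ! 0 = 0"
      using x(2) by (simp add: ascent_seq_def)
    ultimately have "x = stair n (rises x)"
      using stair_rises[OF True] unfolding x(1) by blast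
    moreover have "rises x \<in> Pow {1..<n}"
      using x(1) by (auto simp: rises_def)
    ultimately show ?thesis
      by blast
  next
    case False
    then obtain q where q: "Suc q < n" "x ! Suc q < x ! q" "sorted (take (Suc q) x)"
      using first_descent x(1) by metis
    then have "x ! q = 1" "x ! Suc q = 0"
      using first_descent_to_zero[OF x(2,5,6)] x(1) by simp_all
    then obtain i where "0 < i" "i \<le> q" "x = plateau n i (Suc q)"
      using plateau_after_first_descent x q by metis
    moreover have "(i, Suc q) \<in> inner_pairs n"
      using calculation q(1) by (simp add: inner_pairs_def)
    ultimately show ?thesis
      by force
  qed
qed

lemma avoiders_eq_stairs_plateaus:
  assumes "0 < n"
  shows "avoiders {[0,1,0,1], [0,1,0,2], [0,1,2,0], [0,1,2,1]} n
    = stair n ` Pow {1..<n} \<union> (\<lambda>(i, j). plateau n i j) ` inner_pairs n"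
proof (intro equalityI subsetI)
  fix x assume "x \<in> stair n ` Pow {1..<n} \<union> (\<lambda>(i, j). plateau n i j) ` inner_pairs n"
  then show "x \<in> avoiders {[0,1,0,1], [0,1,0,2], [0,1,2,0], [0,1,2,1]} n"
    using stair_in_avoiders[OF assms] plateau_in_avoiders[OF _ assms]
    by (auto simp: inner_pairs_def)
qed (rule avoider_is_stair_or_plateau)

section \<open>Avoiders of 0102, 0112, 0120, 0121\<close>

lemma ascent_seq_one_before_first_two:
  assumes "ascent_seq x" "p < length x" "2 \<le> x ! p" "\<forall>t<p. x ! t \<le> 1"
  shows "\<exists>t<p. x ! t = 1"
proof (rule ccontr)
  assume none: "\<not> (\<exists>t<p. x ! t = 1)"
  have "x ! 0 = 0"
    using assms(1) by (simp add: ascent_seq_def)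
  then obtain r where r: "p = Suc r"
    using assms(3) by (cases p) auto
  have "x ! t = 0" if "t < p" for t
    using assms(4) none that by force
  then have "sorted (take p x)" "x ! r = 0"
    using r by (auto simp: sorted_iff_nth_Suc)
  then show False
    using ascent_seq_nth_Suc_le[OF assms(1), of r] assms(2,3) r by simp
qed

lemma gt_one_between_one_and_two:
  assumes x: "avoids x [0,1,0,2]" "avoids x [0,1,1,2]"
    and "x ! 0 = 0" "0 < i" "x ! i = 1" "i < k" "k < p" "p < length x" "2 \<le> x ! p"
  shows "1 < x ! k"
proof (rule ccontr)
  assume "\<not> 1 < x ! k"
  then consider "x ! k = 0" | "x ! k = 1"
    by linarith
  then show False
  proof cases
    case 1
    then have "contains x [0,1,0,2]"
      unfolding contains_0102_iff using assms(3-)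
      by (intro exI[of _ 0] exI[of _ i] exI[of _ k] exI[of _ p]) auto
    then show False
      using x(1) by (simp add: avoids_def)
  next
    case 2
    then have "contains x [0,1,1,2]"
      unfolding contains_0112_iff using assms(3-)
      by (intro exI[of _ 0] exI[of _ i] exI[of _ k] exI[of _ p]) auto
    then show False
      using x(2) by (simp add: avoids_def)
  qed
qed

lemma first_entry_ge_two:
  assumes x: "ascent_seq x" "avoids x [0,1,0,2]" "avoids x [0,1,1,2]"
    and p: "p < length x" "2 \<le> x ! p" "\<forall>t<p. x ! t \<le> 1"
  obtains i where "0 < i" "p = Suc i" "\<forall>t<i. x ! t = 0" "x ! i = 1" "x ! p = 2"
proof -
  have x0: "x ! 0 = 0"
    using x(1) by (simp add: ascent_seq_def)
  have "\<exists>t<p. x ! t = 1"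
    using ascent_seq_one_before_first_two[OF x(1) p] .
  then obtain i where i: "i < p" "x ! i = 1" and before: "\<forall>t<i. \<not> (t < p \<and> x ! t = 1)"
    using exists_least_iff[of "\<lambda>t. t < p \<and> x ! t = 1"] by blast
  have zeros: "\<forall>t<i. x ! t = 0"
  proof (intro allI impI)
    fix t assume "t < i"
    then have "t < p" "x ! t \<noteq> 1"
      using before i(1) by auto
    then show "x ! t = 0"
      using p(3) by force
  qed
  have "0 < i"
    using i(2) x0 by (cases i) auto
  have "\<not> Suc i < p"
    using gt_one_between_one_and_two[OF x(2,3) x0 \<open>0 < i\<close> i(2) lessI _ p(1,2)] p(3) by force
  then have "p = Suc i"
    using i(1) by simp
  moreover have "sorted (take (Suc i) x)"
    using zeros by (auto simp: sorted_iff_nth_Suc)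
  then have "x ! p \<le> 2"
    using ascent_seq_nth_Suc_le[OF x(1), of i] i(2) p(1) \<open>p = Suc i\<close> by simp
  ultimately show ?thesis
    using that \<open>0 < i\<close> zeros i(2) p(2) by simp
qed

lemma rising_run_eq_ramp:
  assumes "\<forall>t<i. x ! t = 0" "x ! i = 1" "\<forall>m. i \<le> m \<and> m < j \<longrightarrow> x ! Suc m = Suc (x ! m)"
    and "j < n" "t \<le> j"
  shows "x ! t = ramp n i j ! t"
  using assms(5)
proof (induction t)
  case 0
  then show ?case
    using assms(1,2,4) by (cases i) (simp_all add: ramp_nth)
next
  case (Suc t)
  then show ?case
    using assms(1,3,4) assms(2)[symmetric] by (auto simp: ramp_nth not_less le_Suc_eq)
qed

lemma run_top_le_later_entries:
  assumes x: "avoids x [0,1,2,1]"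
    and run: "0 < i" "i < j" "j < n" "\<forall>t\<le>j. x ! t = ramp n i j ! t"
    and u: "j < u" "u < length x" "2 \<le> x ! u"
  shows "Suc (j - i) \<le> x ! u"
proof (rule ccontr)
  assume "\<not> Suc (j - i) \<le> x ! u"
  moreover define s where "s = i + x ! u - 1"
  ultimately have "i < s" "s < j" "x ! s = x ! u"
    using run u(3) by (auto simp: ramp_nth)
  moreover have "x ! 0 = 0" "x ! j = Suc (j - i)"
    using run by (simp_all add: ramp_nth)
  ultimately have "contains x [0,1,2,1]"
    unfolding contains_0121_iff using u \<open>\<not> Suc (j - i) \<le> x ! u\<close> run(1)
    by (intro exI[of _ 0] exI[of _ s] exI[of _ j] exI[of _ u]) auto
  then show False
    using x by (simp add: avoids_def)
qed

lemma ramp_tail_constant: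
  assumes x: "length x = n" "ascent_seq x" "avoids x [0,1,1,2]" "avoids x [0,1,2,1]"
    and run: "0 < i" "i < j" "j < n" "\<forall>t\<le>j. x ! t = ramp n i j ! t"
    and stop: "Suc j < n \<Longrightarrow> x ! Suc j \<noteq> Suc (x ! j)"
    and big: "\<forall>t. j < t \<and> t < n \<longrightarrow> 2 \<le> x ! t"
    and t: "j < t" "t < n"
  shows "x ! t = Suc (j - i)"
proof -
  have x0: "x ! 0 = 0" and xj: "x ! j = Suc (j - i)"
    using run by (simp_all add: ramp_nth)
  have ge: "Suc (j - i) \<le> x ! u" if "j < u" "u < n" for u
    using run_top_le_later_entries[OF x(4) run] big that x(1) by simp
  have next_val: "x ! Suc j = Suc (j - i)" if "Suc j < n"
  proof -
    have "take (Suc j) x = take (Suc j) (ramp n i j)"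
      using run x(1) by (intro nth_equalityI) (auto simp: ramp_def)
    then have "sorted (take (Suc j) x)"
      using sorted_ramp by (metis sorted_wrt_take)
    then have "x ! Suc j \<le> Suc (x ! j)"
      using ascent_seq_nth_Suc_le[OF x(2)] that x(1) by simp
    then show ?thesis
      using stop[OF that] ge[of "Suc j"] that xj by simp
  qed
  show ?thesis
  proof (cases "t = Suc j")
    case False
    then have "Suc j < t"
      using t by simp
    show ?thesis
    proof (rule ccontr)
      assume "x ! t \<noteq> Suc (j - i)"
      then have "Suc (j - i) < x ! t"
        using ge t by force
      then have "contains x [0,1,1,2]"
        unfolding contains_0112_iff using \<open>Suc j < t\<close> t x(1) x0 xj next_val run(1,2)
        by (intro exI[of _ 0] exI[of _ j] exI[of _ "Suc j"] exI[of _ t]) auto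
      then show False
        using x(3) by (simp add: avoids_def)
    qed
  qed (use next_val t in simp)
qed

lemma ge_two_after_rise_to_two:
  assumes x: "avoids x [0,1,2,0]" "avoids x [0,1,2,1]"
    and "x ! 0 = 0" "0 < i" "x ! i = 1" "i < k" "x ! k = 2" "k < t" "t < length x"
  shows "2 \<le> x ! t"
proof (rule ccontr)
  assume "\<not> 2 \<le> x ! t"
  then consider "x ! t = 0" | "x ! t = 1"
    by linarith
  then show False
  proof cases
    case 1
    then have "contains x [0,1,2,0]"
      unfolding contains_0120_iff using assms(3-)
      by (intro exI[of _ 0] exI[of _ i] exI[of _ k] exI[of _ t]) auto
    then show False
      using x(1) by (simp add: avoids_def)
  next
    case 2
    then have "contains x [0,1,2,1]"
      unfolding contains_0121_iff using assms(3-)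
      by (intro exI[of _ 0] exI[of _ i] exI[of _ k] exI[of _ t]) auto
    then show False
      using x(2) by (simp add: avoids_def)
  qed
qed

lemma maximal_unit_rise:
  assumes "i < n"
  obtains j where "i \<le> j" "j < n" "\<forall>m. i \<le> m \<and> m < j \<longrightarrow> x ! Suc m = Suc (x ! m)"
    "Suc j < n \<Longrightarrow> x ! Suc j \<noteq> Suc (x ! j)"
proof -
  let ?stop = "\<lambda>m. i \<le> m \<and> (Suc m = n \<or> x ! Suc m \<noteq> Suc (x ! m))"
  have "?stop (n - 1)"
    using assms by auto
  then obtain j where j: "?stop j" and before: "\<forall>m<j. \<not> ?stop m"
    using exists_least_iff[of ?stop] by blast
  have "j < n"
  proof (rule ccontr)
    assume "\<not> j < n"
    then have "n - 1 < j"
      using assms by simp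
    then show False
      using before \<open>?stop (n - 1)\<close> by blast
  qed
  moreover have "\<forall>m. i \<le> m \<and> m < j \<longrightarrow> x ! Suc m = Suc (x ! m)"
    using before by auto
  ultimately show ?thesis
    using that j by auto
qed

lemma ramp_after_first_two:
  assumes x: "length x = n" "ascent_seq x" "avoids x [0,1,1,2]" "avoids x [0,1,2,0]" "avoids x [0,1,2,1]"
    and i: "0 < i" "Suc i < n" "\<forall>t<i. x ! t = 0" "x ! i = 1" "x ! Suc i = 2"
  obtains j where "i < j" "j < n" "x = ramp n i j"
proof -
  have x0: "x ! 0 = 0"
    using i(1,3) by simp
  have big: "2 \<le> x ! t" if "i < t" "t < n" for t
  proof (cases "t = Suc i")
    case False
    then show ?thesis
      using ge_two_after_rise_to_two[OF x(4,5) x0 i(1,4) lessI i(5), of t] that x(1) by simp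
  qed (use i(5) in simp)
  obtain j where "i \<le> j" "j < n" and rise: "\<forall>m. i \<le> m \<and> m < j \<longrightarrow> x ! Suc m = Suc (x ! m)"
    and stop: "Suc j < n \<Longrightarrow> x ! Suc j \<noteq> Suc (x ! j)"
    using maximal_unit_rise[of i n x] i(2) by auto
  have "j \<noteq> i"
    using stop i(2,4,5) by auto
  with \<open>i \<le> j\<close> have "i < j"
    by simp
  have rising: "\<forall>t\<le>j. x ! t = ramp n i j ! t"
    using rising_run_eq_ramp[OF i(3,4) rise \<open>j < n\<close>] by blast
  have big_after_j: "\<forall>t. j < t \<and> t < n \<longrightarrow> 2 \<le> x ! t"
    using big \<open>i < j\<close> by auto
  have "x ! t = ramp n i j ! t" if "t < n" for t
  proof (cases "t \<le> j")
    case False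
    then have "x ! t = Suc (j - i)"
      using ramp_tail_constant[OF x(1-3,5) i(1) \<open>i < j\<close> \<open>j < n\<close> rising stop big_after_j] that
      by simp
    then show ?thesis
      using False that \<open>i < j\<close> by (simp add: ramp_nth)
  qed (use rising in simp)
  then have "x = ramp n i j"
    using x(1) by (intro nth_equalityI) (simp_all add: ramp_def)
  with \<open>i < j\<close> \<open>j < n\<close> that show ?thesis
    by blast
qed

lemma avoider_is_binary_word_or_ramp:
  assumes "x \<in> avoiders {[0,1,0,2], [0,1,1,2], [0,1,2,0], [0,1,2,1]} n"
  shows "x \<in> binary_word n ` Pow {1..<n} \<union> (\<lambda>(i, j). ramp n i j) ` inner_pairs n"
proof -
  have x: "length x = n" "ascent_seq x" "avoids x [0,1,0,2]" "avoids x [0,1,1,2]"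
    "avoids x [0,1,2,0]" "avoids x [0,1,2,1]"
    using assms by (simp_all add: avoiders_def)
  have x0: "x ! 0 = 0"
    using x(2) by (simp add: ascent_seq_def)
  show ?thesis
  proof (cases "\<forall>t<n. x ! t \<le> 1")
    case True
    define S where "S = {t \<in> {1..<n}. x ! t = 1}"
    have "x ! t = binary_word n S ! t" if "t < n" for t
      using True that x0 by (cases "t = 0") (auto simp: binary_word_def S_def le_Suc_eq)
    then have "x = binary_word n S"
      using x(1) by (intro nth_equalityI) (simp_all add: binary_word_def)
    moreover have "S \<in> Pow {1..<n}"
      by (auto simp: S_def)
    ultimately show ?thesis
      by blast
  next
    case False
    then obtain p where p: "p < n" "2 \<le> x ! p" and before: "\<forall>t<p. \<not> (t < n \<and> 2 \<le> x ! t)"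
      using exists_least_iff[of "\<lambda>p. p < n \<and> 2 \<le> x ! p"] by (auto simp: not_le)
    then have "\<forall>t<p. x ! t \<le> 1"
      by auto
    then obtain i where i: "0 < i" "p = Suc i" "\<forall>t<i. x ! t = 0" "x ! i = 1" "x ! Suc i = 2"
      using first_entry_ge_two[OF x(2-4)] p x(1) by metis
    then obtain j where "i < j" "j < n" "x = ramp n i j"
      using ramp_after_first_two[OF x(1,2,4-6)] p(1) by metis
    moreover have "(i, j) \<in> inner_pairs n"
      using calculation i(1) by (simp add: inner_pairs_def)
    ultimately show ?thesis
      by force
  qed
qed

lemma avoiders_eq_binary_words_ramps:
  assumes "0 < n"
  shows "avoiders {[0,1,0,2], [0,1,1,2], [0,1,2,0], [0,1,2,1]} n
    = binary_word n ` Pow {1..<n} \<union> (\<lambda>(i, j). ramp n i j) ` inner_pairs n"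
proof (intro equalityI subsetI)
  fix x assume "x \<in> binary_word n ` Pow {1..<n} \<union> (\<lambda>(i, j). ramp n i j) ` inner_pairs n"
  then show "x \<in> avoiders {[0,1,0,2], [0,1,1,2], [0,1,2,0], [0,1,2,1]} n"
  proof (elim UnE imageE)
    fix S assume "S \<in> Pow {1..<n}" "x = binary_word n S"
    moreover from this have "0 \<notin> S"
      by auto
    ultimately show ?thesis
      using binary_word_in_avoiders[OF _ assms] by simp
  next
    fix ij assume "ij \<in> inner_pairs n" "x = (\<lambda>(i, j). ramp n i j) ij"
    then show ?thesis
      using ramp_in_avoiders[OF _ assms] by (auto simp: inner_pairs_def)
  qed
qed (rule avoider_is_binary_word_or_ramp)

section \<open>Counting\<close>

lemma inj_on_stair: "inj_on (stair n) (Pow {1..<n})"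
  by (rule inj_on_inverseI[of _ rises]) (simp add: rises_stair)

lemma inj_on_binary_word: "inj_on (binary_word n) (Pow {1..<n})"
proof (rule inj_on_inverseI[of _ "\<lambda>x. {t. t < n \<and> x ! t = 1}"])
  fix S assume "S \<in> Pow {1..<n}"
  moreover have "binary_word n S ! t = 1 \<longleftrightarrow> t \<in> S" if "t < n" for t
    using that by (simp add: binary_word_def)
  ultimately show "{t. t < n \<and> binary_word n S ! t = 1} = S"
    by auto
qed

lemma plateau_ones: "j \<le> n \<Longrightarrow> {t. t < n \<and> plateau n i j ! t = 1} = {i..<j}"
  by (auto simp: plateau_def split: if_splits)

lemma inj_on_plateau: "inj_on (\<lambda>(i, j). plateau n i j) (inner_pairs n)"
proof (rule inj_onI, clarsimp simp: inner_pairs_def)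
  fix i j i' j' assume "0 < i" "i < j" "j < n" "0 < i'" "i' < j'" "j' < n"
    and "plateau n i j = plateau n i' j'"
  then have "{i..<j} = {i'..<j'}"
    using plateau_ones[of j n i] plateau_ones[of j' n i'] by simp
  then show "i = i' \<and> j = j'"
    using atLeastLessThan_inj \<open>i < j\<close> \<open>i' < j'\<close> by blast
qed

lemma ramp_zeros:
  assumes "i \<le> n"
  shows "{t. t < n \<and> ramp n i j ! t = 0} = {..<i}"
proof -
  have "ramp n i j ! t = 0 \<longleftrightarrow> t < i" if "t < n" for t
    using that by (simp add: ramp_def)
  then show ?thesis
    using assms by auto
qed

lemma ramp_last: "i \<le> j \<Longrightarrow> j < n \<Longrightarrow> ramp n i j ! (n - 1) = Suc (j - i)"
  by (simp add: ramp_def min_absorb2)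

lemma inj_on_ramp: "inj_on (\<lambda>(i, j). ramp n i j) (inner_pairs n)"
proof (rule inj_onI, clarsimp simp: inner_pairs_def)
  fix i j i' j' assume "0 < i" "i < j" "j < n" "0 < i'" "i' < j'" "j' < n"
    and eq: "ramp n i j = ramp n i' j'"
  then have "{..<i} = {..<i'}"
    using ramp_zeros[of i n j] ramp_zeros[of i' n j'] by simp
  then have "i = i'"
    by simp
  moreover have "Suc (j - i) = Suc (j' - i')"
    using eq ramp_last[of i j n] ramp_last[of i' j' n] \<open>i < j\<close> \<open>j < n\<close> \<open>i' < j'\<close> \<open>j' < n\<close>
    by simp
  ultimately show "i = i' \<and> j = j'"
    using \<open>i < j\<close> \<open>i' < j'\<close> by simp
qed

lemma stair_plateau_disjoint: "stair n ` A \<inter> (\<lambda>(i, j). plateau n i j) ` inner_pairs n = {}"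
proof (rule equals0I)
  fix x assume "x \<in> stair n ` A \<inter> (\<lambda>(i, j). plateau n i j) ` inner_pairs n"
  then obtain S i j where eq: "stair n S = plateau n i j" and ij: "0 < i" "i < j" "j < n"
    by (auto simp: inner_pairs_def)
  have "plateau n i j ! (j - 1) \<le> plateau n i j ! j"
    using sorted_stair[of n S] ij unfolding eq by (intro sorted_nth_mono) (simp_all add: plateau_def)
  moreover have "i \<le> j - 1"
    using ij by simp
  ultimately show False
    using ij by (simp add: plateau_def)
qed

lemma binary_word_ramp_disjoint: "binary_word n ` A \<inter> (\<lambda>(i, j). ramp n i j) ` inner_pairs n = {}"
proof (rule equals0I)
  fix x assume "x \<in> binary_word n ` A \<inter> (\<lambda>(i, j). ramp n i j) ` inner_pairs n"
  then obtain S i j where eq: "binary_word n S = ramp n i j" and "0 < i" "i < j" "j < n"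
    by (auto simp: inner_pairs_def)
  have "binary_word n S ! Suc i \<le> 1" "ramp n i j ! Suc i = 2"
    using \<open>i < j\<close> \<open>j < n\<close> by (simp_all add: binary_word_def ramp_def)
  then show False
    unfolding eq by simp
qed

lemma card_inner_pairs: "card (inner_pairs n) = (n - 1) choose 2"
proof -
  have "bij_betw (\<lambda>(i, j). {i, j}) (inner_pairs n) {T. T \<subseteq> {1..<n} \<and> card T = 2}"
  proof (rule bij_betw_imageI)
    show "inj_on (\<lambda>(i, j). {i, j}) (inner_pairs n)"
      by (auto simp: inj_on_def inner_pairs_def doubleton_eq_iff)
    show "(\<lambda>(i, j). {i, j}) ` inner_pairs n = {T. T \<subseteq> {1..<n} \<and> card T = 2}"
    proof (intro equalityI subsetI)
      fix T assume T: "T \<in> {T. T \<subseteq> {1..<n} \<and> card T = 2}"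
      then obtain a b where ab: "T = {a, b}" "a \<noteq> b"
        by (auto simp: card_2_iff)
      then have "T = {min a b, max a b}" "min a b < max a b"
        by (auto simp: min_def max_def)
      then show "T \<in> (\<lambda>(i, j). {i, j}) ` inner_pairs n"
        using T by (intro image_eqI[of _ _ "(min a b, max a b)"]) (auto simp: inner_pairs_def)
    qed (auto simp: inner_pairs_def)
  qed
  then show ?thesis
    using n_subsets[of "{1..<n}" 2] by (simp add: bij_betw_same_card)
qed

lemma card_disjoint_images:
  assumes "inj_on f A" "inj_on g B" "f ` A \<inter> g ` B = {}" "finite A" "finite B"
  shows "card (f ` A \<union> g ` B) = card A + card B"
  using assms by (simp add: card_Un_disjoint card_image)

lemma finite_inner_pairs: "finite (inner_pairs n)"
  by (rule finite_subset[of _ "{..<n} \<times> {..<n}"]) (auto simp: inner_pairs_def)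

theorem theorem5p2:
  fixes n :: nat
  assumes "n \<ge> 1"
  shows "a_count {[0,1,0,1], [0,1,0,2], [0,1,2,0], [0,1,2,1]} n = 2 ^ (n - 1) + (n - 1 choose 2)
       \<and> a_count {[0,1,0,2], [0,1,1,2], [0,1,2,0], [0,1,2,1]} n = 2 ^ (n - 1) + (n - 1 choose 2)"
proof -
  have n: "0 < n"
    using assms by simp
  have count: "a_count P n = card (avoiders P n)" for P
    by (simp add: a_count_def avoiders_def)
  have A: "card (stair n ` Pow {1..<n} \<union> (\<lambda>(i, j). plateau n i j) ` inner_pairs n)
      = card (Pow {1..<n}) + card (inner_pairs n)"
    by (rule card_disjoint_images[OF inj_on_stair inj_on_plateau stair_plateau_disjoint])
      (simp_all add: finite_inner_pairs)
  have B: "card (binary_word n ` Pow {1..<n} \<union> (\<lambda>(i, j). ramp n i j) ` inner_pairs n)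
      = card (Pow {1..<n}) + card (inner_pairs n)"
    by (rule card_disjoint_images[OF inj_on_binary_word inj_on_ramp binary_word_ramp_disjoint])
      (simp_all add: finite_inner_pairs)
  show ?thesis
    unfolding count avoiders_eq_stairs_plateaus[OF n] avoiders_eq_binary_words_ramps[OF n] A B card_inner_pairs
    by (simp add: card_Pow)
qed

end
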